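(* For an integer $k\ge0$ and real $\alpha>k$, $$\sum_{n=1}^\infty\frac{H_{n+\alpha}}{(n+k)(n+\alpha)}=\frac{H_{\alpha-k}^2+H_{\alpha-k}^{(2)}}{\alpha-k}-\sum_{j=1}^k\frac{H_{\alpha+j-k}}{j(\alpha+j-k)}.$$
   Context: Shifted harmonic numbers: for a real $\alpha$ that is not a negative integer, $H_\alpha := \sum_{k=1}^\infty\left(\frac1k-\frac1{k+\alpha}\right)$ and, for integers $m\ge 2$, $H_\alpha^{(m)} := \sum_{k=1}^\infty\left(\frac1{k^m}-\frac1{(k+\alpha)^m}\right)=\zeta(m)-\zeta(m,\alpha+1)$, where $\zeta$ is the Riemann zeta function and $\zeta(s,\alpha+1)=\sum_{n=1}^\infty (n+\alpha)^{-s}$ is the Hurwitz zeta function. Powers such as $H_\alpha^2$ mean $(H_\alpha)^2$. Empty sums are $0$. *)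

theory Defs
  imports "HOL-Analysis.Analysis"
begin

definition shifted_harmonic :: "real \<Rightarrow> real" where
  "shifted_harmonic a = (\<Sum>k. 1 / real (k + 1) - 1 / (real (k + 1) + a))"

definition shifted_harmonic_gen :: "nat \<Rightarrow> real \<Rightarrow> real" where
  "shifted_harmonic_gen m a = (\<Sum>k. 1 / real (k + 1) ^ m - 1 / (real (k + 1) + a) ^ m)"

end

theory Submission
  imports Defs "HOL-Real_Asymp.Real_Asymp"
begin

text \<open>
  Write G(a) for the sum over n \<ge> 1 of H_(n+a) / (n (n + a)); the theorem is
  G(b) = (H_b^2 + H^(2)_b) / b for b = \<alpha> - k, with the summation index shifted by k.
  Splitting H_(n+a) = H_a + (H_(n+a) - H_a) gives a G(a) = H_a^2 + R(a) (R is
  euler_remainder), and telescoping gives (a + 1) G(a + 1) - a G(a) = 2 H_(a+1) / (a + 1);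
  together, R(a + 1) = R(a) + 1 / (a + 1)^2, which is also the recurrence of H^(2). So
  R - H^(2) is 1-periodic on (0, \<infinity>). Both functions are nonnegative and change at most
  by a factor (y/x)^3 between x \<le> y, and H^(2) is bounded; comparing the difference at
  x + N and y + N for N \<rightarrow> \<infinity> shows that it is constant, and since both functions
  vanish linearly at 0, the constant is 0.
\<close>

section \<open>Functions of ratio-bounded growth\<close>

definition ratio_bounded :: "nat \<Rightarrow> (real \<Rightarrow> real) \<Rightarrow> bool" where
  "ratio_bounded p f \<longleftrightarrow>
     (\<forall>x y. 0 < x \<longrightarrow> x \<le> y \<longrightarrow>
        0 \<le> f x \<and> (x / y) ^ p * f x \<le> f y \<and> f y \<le> (y / x) ^ p * f x)"

lemma ratio_boundedI:
  assumes "\<And>x y. 0 < x \<Longrightarrow> x \<le> y \<Longrightarrow> 0 \<le> f x"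
    and "\<And>x y. 0 < x \<Longrightarrow> x \<le> y \<Longrightarrow> (x / y) ^ p * f x \<le> f y"
    and "\<And>x y. 0 < x \<Longrightarrow> x \<le> y \<Longrightarrow> f y \<le> (y / x) ^ p * f x"
  shows "ratio_bounded p f"
  using assms unfolding ratio_bounded_def by blast

lemma ratio_boundedD:
  assumes "ratio_bounded p f" "0 < x" "x \<le> y"
  shows "0 \<le> f x" "(x / y) ^ p * f x \<le> f y" "f y \<le> (y / x) ^ p * f x"
  using assms unfolding ratio_bounded_def by blast+

lemma ratio_bounded_nonneg: "ratio_bounded p f \<Longrightarrow> 0 < x \<Longrightarrow> 0 \<le> f x"
  using ratio_boundedD(1)[of p f x x] by simp

lemma ratio_bounded_cong:
  assumes "\<And>x. 0 < x \<Longrightarrow> f x = g x"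
  shows "ratio_bounded p f \<longleftrightarrow> ratio_bounded p g"
proof -
  have "f x = g x \<and> f y = g y" if "0 < x" "x \<le> y" for x y
    using assms that by simp
  then show ?thesis
    unfolding ratio_bounded_def by (metis (no_types, lifting))
qed

lemma ratio_bounded_const: "0 \<le> c \<Longrightarrow> ratio_bounded 0 (\<lambda>_. c)"
  by (rule ratio_boundedI) auto

lemma ratio_bounded_ident: "ratio_bounded 1 (\<lambda>x. x)"
  by (rule ratio_boundedI) (auto simp: field_simps mult_mono)

lemma ratio_bounded_inverse_add:
  assumes "0 \<le> c"
  shows "ratio_bounded 1 (\<lambda>x. 1 / (c + x))"
proof (rule ratio_boundedI)
  fix x y :: real assume xy: "0 < x" "x \<le> y"
  show "0 \<le> 1 / (c + x)" using assms xy by simp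
  have "x * (c + y) \<le> y * (c + x)" using assms xy by (simp add: algebra_simps mult_left_mono)
  then show "(x / y) ^ 1 * (1 / (c + x)) \<le> 1 / (c + y)"
    using assms xy by (simp add: divide_simps)
  have "x * (c + x) \<le> y * (c + y)" using assms xy by (intro mult_mono) auto
  then show "1 / (c + y) \<le> (y / x) ^ 1 * (1 / (c + x))"
    using assms xy by (simp add: divide_simps)
qed

lemma ratio_bounded_mono:
  assumes "ratio_bounded p f" "p \<le> q"
  shows "ratio_bounded q f"
proof (rule ratio_boundedI)
  fix x y :: real assume xy: "0 < x" "x \<le> y"
  note f = ratio_boundedD[OF assms(1) xy]
  show "0 \<le> f x" by (fact f(1))
  have "(x / y) ^ q \<le> (x / y) ^ p"
    using xy assms(2) by (intro power_decreasing) auto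
  from mult_right_mono[OF this f(1)] f(2) show "(x / y) ^ q * f x \<le> f y" by linarith
  have "(y / x) ^ p \<le> (y / x) ^ q"
    using xy assms(2) by (intro power_increasing) auto
  from mult_right_mono[OF this f(1)] f(3) show "f y \<le> (y / x) ^ q * f x" by linarith
qed

lemma ratio_bounded_add:
  assumes "ratio_bounded p f" "ratio_bounded p g"
  shows "ratio_bounded p (\<lambda>x. f x + g x)"
  using assms unfolding ratio_bounded_def by (auto simp: distrib_left intro: add_mono)

lemma ratio_bounded_mult:
  assumes f: "ratio_bounded p f" and g: "ratio_bounded q g"
  shows "ratio_bounded (p + q) (\<lambda>x. f x * g x)"
proof (rule ratio_boundedI)
  fix x y :: real assume xy: "0 < x" "x \<le> y"
  note f' = ratio_boundedD[OF f xy] and g' = ratio_boundedD[OF g xy]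
  have r: "0 \<le> x / y" "0 \<le> y / x" using xy by auto
  have fy: "0 \<le> f y" "0 \<le> g y" using ratio_bounded_nonneg[OF f] ratio_bounded_nonneg[OF g] xy by simp_all
  show "0 \<le> f x * g x" using f' g' by simp
  have "((x / y) ^ p * f x) * ((x / y) ^ q * g x) \<le> f y * g y"
    using f' g' r fy by (intro mult_mono) auto
  then show "(x / y) ^ (p + q) * (f x * g x) \<le> f y * g y"
    by (simp add: power_add ac_simps)
  have "f y * g y \<le> ((y / x) ^ p * f x) * ((y / x) ^ q * g x)"
    using f' g' r fy by (intro mult_mono) auto
  then show "f y * g y \<le> (y / x) ^ (p + q) * (f x * g x)"
    by (simp add: power_add ac_simps)
qed

lemma ratio_bounded_sum:
  assumes "\<And>i. i \<in> I \<Longrightarrow> ratio_bounded p (\<lambda>x. f x i)"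
  shows "ratio_bounded p (\<lambda>x. \<Sum>i\<in>I. f x i)"
proof (rule ratio_boundedI)
  fix x y :: real assume xy: "0 < x" "x \<le> y"
  have f: "0 \<le> f x i" "(x / y) ^ p * f x i \<le> f y i" "f y i \<le> (y / x) ^ p * f x i"
    if "i \<in> I" for i
    using ratio_boundedD[OF assms[OF that] xy] by auto
  show "0 \<le> (\<Sum>i\<in>I. f x i)" by (intro sum_nonneg f(1))
  show "(x / y) ^ p * (\<Sum>i\<in>I. f x i) \<le> (\<Sum>i\<in>I. f y i)"
    unfolding sum_distrib_left by (intro sum_mono f(2))
  show "(\<Sum>i\<in>I. f y i) \<le> (y / x) ^ p * (\<Sum>i\<in>I. f x i)"
    unfolding sum_distrib_left by (intro sum_mono f(3))
qed

lemma ratio_bounded_suminf: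
  assumes "\<And>n. ratio_bounded p (\<lambda>x. f x n)" and "\<And>x. 0 < x \<Longrightarrow> summable (f x)"
  shows "ratio_bounded p (\<lambda>x. \<Sum>n. f x n)"
proof (rule ratio_boundedI)
  fix x y :: real assume xy: "0 < x" "x \<le> y"
  note f = ratio_boundedD[OF assms(1) xy]
  have sx: "summable (f x)" and sy: "summable (f y)" using assms(2) xy by auto
  show "0 \<le> (\<Sum>n. f x n)" by (intro suminf_nonneg sx f(1))
  show "(x / y) ^ p * (\<Sum>n. f x n) \<le> (\<Sum>n. f y n)"
    unfolding suminf_mult[OF sx, symmetric] by (intro suminf_le summable_mult sx sy f(2))
  show "(\<Sum>n. f y n) \<le> (y / x) ^ p * (\<Sum>n. f x n)"
    unfolding suminf_mult[OF sx, symmetric] by (intro suminf_le summable_mult sx sy f(3))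
qed

lemma ratio_bounded_diff_le:
  assumes "ratio_bounded p f" "0 < x" "x \<le> y"
  shows "\<bar>f y - f x\<bar> \<le> ((y / x) ^ p - 1) * f x"
proof -
  note f = ratio_boundedD[OF assms]
  define t where "t = (x / y) ^ p"
  have t: "0 < t" "t \<le> 1" "(y / x) ^ p = 1 / t"
    using assms by (simp_all add: t_def power_divide power_le_one power_mono)
  have "(1 / t - 1) - (1 - t) = (1 - t) ^ 2 / t"
    using t(1) by (simp add: field_simps power2_eq_square)
  then have "1 - t \<le> 1 / t - 1"
    using t(1) by (metis diff_ge_0_iff_ge divide_nonneg_pos zero_le_power2)
  then have "(1 - t) * f x \<le> (1 / t - 1) * f x" using f(1) by (rule mult_right_mono)
  then show ?thesis
    using f(2,3) unfolding t(3) t_def[symmetric] by (simp add: algebra_simps abs_le_iff)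
qed

lemma periodic_add_nat:
  assumes "\<And>x. 0 < x \<Longrightarrow> \<phi> (x + 1) = \<phi> x" "0 < x"
  shows "\<phi> (x + real n) = \<phi> x"
proof (induction n)
  case (Suc n)
  have "\<phi> (x + real (Suc n)) = \<phi> ((x + real n) + 1)" by (simp add: add_ac)
  also have "\<dots> = \<phi> (x + real n)" using assms by (intro assms(1)) simp
  finally show ?case using Suc by simp
qed simp

lemma ratio_bounded_periodic_diff_const:
  assumes f: "ratio_bounded p f" and g: "ratio_bounded q g"
    and g_le: "\<And>x. 0 < x \<Longrightarrow> g x \<le> B"
    and periodic: "\<And>x. 0 < x \<Longrightarrow> f (x + 1) - g (x + 1) = f x - g x"
    and "0 < m" "m \<le> M"
  shows "f M - g M = f m - g m"
proof -
  define \<phi> where "\<phi> x = f x - g x" for x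
  define r where "r N = (M + real N) / (m + real N)" for N
  define bound where "bound N = (r N ^ p - 1) * (\<bar>\<phi> m\<bar> + B) + (r N ^ q - 1) * B" for N
  have "\<bar>\<phi> M - \<phi> m\<bar> \<le> bound N" for N
  proof -
    define x y where "x = m + real N" and "y = M + real N"
    have xy: "0 < x" "x \<le> y" and r: "r N = y / x"
      using assms by (auto simp: x_def y_def r_def)
    have r_ge: "1 \<le> r N" using xy by (simp add: r)
    have shift: "\<phi> M = \<phi> y" "\<phi> m = \<phi> x"
      using periodic_add_nat[of \<phi>] periodic assms(5,6) by (auto simp: \<phi>_def x_def y_def)
    \<comment> \<open>f need not be bounded, but along m + N it is, since f - g is periodic and g is bounded\<close>
    have "f x \<le> \<bar>\<phi> m\<bar> + B" and g_x: "0 \<le> g x" "g x \<le> B"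
      using shift g_le[OF xy(1)] ratio_bounded_nonneg[OF g xy(1)] by (auto simp: \<phi>_def)
    then have "(r N ^ p - 1) * f x \<le> (r N ^ p - 1) * (\<bar>\<phi> m\<bar> + B)"
      using r_ge by (intro mult_left_mono) (auto simp: one_le_power)
    moreover have "(r N ^ q - 1) * g x \<le> (r N ^ q - 1) * B"
      using r_ge g_x by (intro mult_left_mono) (auto simp: one_le_power)
    moreover have "\<bar>f y - f x\<bar> \<le> (r N ^ p - 1) * f x" "\<bar>g y - g x\<bar> \<le> (r N ^ q - 1) * g x"
      unfolding r by (intro ratio_bounded_diff_le f g xy)+
    ultimately show ?thesis
      unfolding shift bound_def by (simp add: \<phi>_def abs_le_iff)
  qed
  moreover have "r \<longlonglongrightarrow> 1"
    unfolding r_def by real_asymp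
  then have "bound \<longlonglongrightarrow> (1 ^ p - 1) * (\<bar>\<phi> m\<bar> + B) + (1 ^ q - 1) * B"
    unfolding bound_def by (intro tendsto_intros)
  ultimately have "\<bar>\<phi> M - \<phi> m\<bar> \<le> 0"
    by (intro LIMSEQ_le_const[of bound]) auto
  then show ?thesis by (simp add: \<phi>_def)
qed

lemma ratio_bounded_periodic_diff_eq:
  assumes f: "ratio_bounded p f" and g: "ratio_bounded q g"
    and g_le: "\<And>x. 0 < x \<Longrightarrow> g x \<le> B"
    and periodic: "\<And>x. 0 < x \<Longrightarrow> f (x + 1) - g (x + 1) = f x - g x"
    and f_lim: "(f \<longlongrightarrow> 0) (at_right 0)" and g_lim: "(g \<longlongrightarrow> 0) (at_right 0)"
    and "0 < b"
  shows "f b = g b"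
proof -
  have "f x - g x = f b - g b" if "0 < x" for x
    using ratio_bounded_periodic_diff_const[OF f g g_le periodic] \<open>0 < b\<close> that
    by (cases "x \<le> b") (metis linear)+
  then have "eventually (\<lambda>x. f x - g x = f b - g b) (at_right 0)"
    using eventually_at_right_less[of "0 :: real"] by (auto elim: eventually_mono)
  then have "((\<lambda>x. f x - g x) \<longlongrightarrow> f b - g b) (at_right 0)"
    by (rule tendsto_eventually)
  moreover have "((\<lambda>x. f x - g x) \<longlongrightarrow> 0 - 0) (at_right 0)"
    by (intro tendsto_diff f_lim g_lim)
  ultimately have "f b - g b = 0 - 0"
    using tendsto_unique[OF trivial_limit_at_right_real] by blast
  then show ?thesis by simp
qed

section \<open>Shifted harmonic numbers\<close>

lemma summable_inverse_Suc_power: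
  assumes "2 \<le> m"
  shows "summable (\<lambda>k. 1 / real (k + 1) ^ m)"
proof -
  have "summable (\<lambda>n. inverse (real n ^ m))"
    using assms by (rule inverse_power_summable)
  then show ?thesis
    by (subst (asm) summable_Suc_iff[symmetric]) (simp add: inverse_eq_divide)
qed

lemma inverse_diff_inverse_add:
  fixes c x :: real
  assumes "0 < c" "0 \<le> x"
  shows "1 / c - 1 / (c + x) = x / (c * (c + x))"
  using assms by (simp add: field_simps)

lemma shifted_harmonic_series:
  assumes "0 \<le> x"
  shows "(\<lambda>k. 1 / real (k + 1) - 1 / (real (k + 1) + x)) sums shifted_harmonic x"
proof -
  have "summable (\<lambda>k. 1 / real (k + 1) - 1 / (real (k + 1) + x))"
  proof (rule summable_comparison_test')
    show "summable (\<lambda>k. x * (1 / real (k + 1) ^ 2))"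
      by (intro summable_mult summable_inverse_Suc_power) simp
    show "norm (1 / real (k + 1) - 1 / (real (k + 1) + x)) \<le> x * (1 / real (k + 1) ^ 2)" for k
      using assms
      by (simp add: inverse_diff_inverse_add power2_eq_square divide_left_mono mult_left_mono)
  qed
  then show ?thesis
    unfolding shifted_harmonic_def by (rule summable_sums)
qed

lemma shifted_harmonic_sums:
  assumes "0 \<le> x"
  shows "(\<lambda>k. x / (real (k + 1) * (real (k + 1) + x))) sums shifted_harmonic x"
  using shifted_harmonic_series[OF assms] assms by (simp add: inverse_diff_inverse_add)

lemma shifted_harmonic_nonneg: "0 \<le> x \<Longrightarrow> 0 \<le> shifted_harmonic x"
  by (rule sums_le[OF _ sums_zero shifted_harmonic_sums]) simp_all

lemma shifted_harmonic_Suc: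
  assumes "0 \<le> x"
  shows "shifted_harmonic (x + 1) = shifted_harmonic x + 1 / (x + 1)"
proof -
  have "(\<lambda>k. 1 / (real (Suc k) + 1 + x) - 1 / (real k + 1 + x)) sums (0 - 1 / (real 0 + 1 + x))"
    by (rule telescope_sums) real_asymp
  moreover have "(\<lambda>k. (1 / real (k + 1) - 1 / (real (k + 1) + x))
                     - (1 / real (k + 1) - 1 / (real (k + 1) + (x + 1))))
                   sums (shifted_harmonic x - shifted_harmonic (x + 1))"
    using assms by (intro sums_diff shifted_harmonic_series) auto
  ultimately show ?thesis
    by (simp add: sums_iff add_ac)
qed

lemma shifted_harmonic_add_nat:
  assumes "0 \<le> x"
  shows "shifted_harmonic (real n + x) = shifted_harmonic x + (\<Sum>i<n. 1 / (real i + 1 + x))"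
proof (induction n)
  case (Suc n)
  have "shifted_harmonic (real (Suc n) + x) = shifted_harmonic ((real n + x) + 1)"
    by (simp add: add_ac)
  also have "\<dots> = shifted_harmonic (real n + x) + 1 / (real n + 1 + x)"
    using assms by (subst shifted_harmonic_Suc) (auto simp: add_ac)
  finally show ?case using Suc by simp
qed simp

lemma harm_le_ln_add_one: "harm n \<le> ln (real n + 1) + (1 :: real)"
proof (cases "n = 0")
  case False
  then have "harm n - ln (real n) \<le> harm 1 - ln (real 1)"
    by (intro euler_mascheroni_sequence_decreasing) auto
  moreover have "ln (real n) \<le> ln (real n + 1)"
    using False by simp
  ultimately show ?thesis by (simp add: harm_def)
qed (simp add: harm_def)

lemma shifted_harmonic_add_nat_le:
  assumes "0 \<le> x"
  shows "shifted_harmonic (real n + x) \<le> shifted_harmonic x + ln (real n + 1) + 1"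
proof -
  have "(\<Sum>i<n. 1 / (real i + 1 + x)) \<le> harm n"
    unfolding harm_altdef using assms by (intro sum_mono) (simp add: inverse_eq_divide frac_le)
  then show ?thesis
    using shifted_harmonic_add_nat[OF assms, of n] harm_le_ln_add_one[of n] by simp
qed

lemma shifted_harmonic_gen_series:
  assumes "2 \<le> m" "0 \<le> x"
  shows "(\<lambda>k. 1 / real (k + 1) ^ m - 1 / (real (k + 1) + x) ^ m) sums shifted_harmonic_gen m x"
proof -
  have "summable (\<lambda>k. 1 / (real (k + 1) + x) ^ m)"
  proof (rule summable_comparison_test'[OF summable_inverse_Suc_power[OF assms(1)]])
    show "norm (1 / (real (k + 1) + x) ^ m) \<le> 1 / real (k + 1) ^ m" for k
      using assms(2) by (simp add: divide_left_mono power_mono)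
  qed
  then have "summable (\<lambda>k. 1 / real (k + 1) ^ m - 1 / (real (k + 1) + x) ^ m)"
    by (intro summable_diff summable_inverse_Suc_power assms(1))
  then show ?thesis
    unfolding shifted_harmonic_gen_def by (rule summable_sums)
qed

lemma shifted_harmonic_gen_Suc:
  assumes "2 \<le> m" "0 \<le> x"
  shows "shifted_harmonic_gen m (x + 1) = shifted_harmonic_gen m x + 1 / (x + 1) ^ m"
proof -
  have "(\<lambda>k. (1 / (real k + 1 + x)) ^ m) \<longlonglongrightarrow> 0 ^ m"
    by (intro tendsto_power) real_asymp
  then have "(\<lambda>k. 1 / (real k + 1 + x) ^ m) \<longlonglongrightarrow> 0"
    using assms(1) by (simp add: power_one_over zero_power)
  then have "(\<lambda>k. 1 / (real (Suc k) + 1 + x) ^ m - 1 / (real k + 1 + x) ^ m)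
               sums (0 - 1 / (real 0 + 1 + x) ^ m)"
    by (rule telescope_sums)
  moreover have "(\<lambda>k. (1 / real (k + 1) ^ m - 1 / (real (k + 1) + x) ^ m)
                     - (1 / real (k + 1) ^ m - 1 / (real (k + 1) + (x + 1)) ^ m))
                   sums (shifted_harmonic_gen m x - shifted_harmonic_gen m (x + 1))"
    using assms by (intro sums_diff shifted_harmonic_gen_series) auto
  ultimately show ?thesis
    by (simp add: sums_iff add_ac)
qed

lemma shifted_harmonic_gen_le:
  assumes "2 \<le> m" "0 \<le> x"
  shows "shifted_harmonic_gen m x \<le> (\<Sum>k. 1 / real (k + 1) ^ m)"
  using assms
  by (intro sums_le[OF _ shifted_harmonic_gen_series summable_sums[OF summable_inverse_Suc_power]])
     auto

lemma inverse_square_diff_factor: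
  fixes c x :: real
  assumes "0 < c" "0 \<le> x"
  shows "1 / c ^ 2 - 1 / (c + x) ^ 2 = x * (1 / (c + x)) * (1 / c) * (1 / c + 1 / (c + x))"
proof -
  have "c \<noteq> 0" "c + x \<noteq> 0" using assms by auto
  then show ?thesis by (simp add: divide_simps power2_eq_square) (simp add: algebra_simps)
qed

lemma ratio_bounded_shifted_harmonic_gen2: "ratio_bounded 3 (shifted_harmonic_gen 2)"
  unfolding shifted_harmonic_gen_def
proof (rule ratio_bounded_suminf)
  fix k
  define c where "c = real (k + 1)"
  have c: "0 < c" by (simp add: c_def)
  have "ratio_bounded (1 + 1 + 0 + 1) (\<lambda>x. x * (1 / (c + x)) * (1 / c) * (1 / c + 1 / (c + x)))"
    using c
    by (intro ratio_bounded_mult ratio_bounded_add ratio_bounded_ident ratio_bounded_inverse_add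
        ratio_bounded_const ratio_bounded_mono[OF ratio_bounded_const]) auto
  then show "ratio_bounded 3 (\<lambda>x. 1 / c ^ 2 - 1 / (c + x) ^ 2)"
    using c by (subst ratio_bounded_cong[OF inverse_square_diff_factor]) (auto simp: numeral_3_eq_3)
qed (use shifted_harmonic_gen_series in \<open>auto simp: sums_iff\<close>)

lemma shifted_harmonic_gen2_le_linear:
  assumes "0 \<le> x"
  shows "shifted_harmonic_gen 2 x \<le> 2 * x * (\<Sum>k. 1 / real (k + 1) ^ 2)"
proof -
  have "1 / c ^ 2 - 1 / (c + x) ^ 2 \<le> 2 * x * (1 / c ^ 2)" if "1 \<le> c" for c :: real
  proof -
    have inv: "1 / (c + x) \<le> 1 / c" "1 / c \<le> 1"
      using that assms by (auto intro: divide_left_mono)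
    then have sum_le: "1 / c + 1 / (c + x) \<le> 2" by linarith
    have "1 / c ^ 2 - 1 / (c + x) ^ 2 = x * (1 / (c + x)) * (1 / c) * (1 / c + 1 / (c + x))"
      using that assms by (intro inverse_square_diff_factor) auto
    also have "\<dots> \<le> x * (1 / c) * (1 / c) * 2"
      using that assms inv(1) sum_le by (intro mult_mono mult_right_mono mult_left_mono) auto
    also have "\<dots> = 2 * x * (1 / c ^ 2)"
      by (simp add: power2_eq_square)
    finally show ?thesis .
  qed
  then show ?thesis
    using assms
    by (intro sums_le[OF _ shifted_harmonic_gen_series sums_mult[OF summable_sums[OF summable_inverse_Suc_power]]])
       auto
qed

section \<open>The Euler-type sum\<close>

definition euler_term :: "real \<Rightarrow> nat \<Rightarrow> real" where
  "euler_term a n = shifted_harmonic (real (n + 1) + a) / (real (n + 1) * (real (n + 1) + a))"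

lemma euler_term_nonneg: "0 \<le> a \<Longrightarrow> 0 \<le> euler_term a n"
  unfolding euler_term_def by (simp add: shifted_harmonic_nonneg)

lemma summable_euler_term:
  assumes "0 \<le> a"
  shows "summable (euler_term a)"
proof (rule summable_comparison_test')
  define C where "C = shifted_harmonic a + 1"
  have "(\<lambda>n. (C + ln (real n + 2)) / (real n + 1) ^ 2) \<in> O(\<lambda>n. real n powr (-3/2))"
    by real_asymp
  moreover have "summable (\<lambda>n. norm (real n powr (-3/2)))"
    by (simp add: summable_real_powr_iff)
  ultimately show "summable (\<lambda>n. (C + ln (real n + 2)) / (real n + 1) ^ 2)"
    by (rule summable_comparison_test_bigo[rotated])
  fix n
  have "shifted_harmonic (real (n + 1) + a) \<le> C + ln (real n + 2)"
    using shifted_harmonic_add_nat_le[OF assms, of "n + 1"] by (simp add: C_def add_ac)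
  moreover have "(real n + 1) ^ 2 \<le> real (n + 1) * (real (n + 1) + a)"
    using mult_left_mono[of "real n + 1" "real n + 1 + a" "real n + 1"] assms
    by (simp add: power2_eq_square add_ac)
  ultimately have "euler_term a n \<le> (C + ln (real n + 2)) / (real n + 1) ^ 2"
    unfolding euler_term_def using assms
    by (intro frac_le) (auto simp: C_def add_nonneg_nonneg shifted_harmonic_nonneg)
  then show "norm (euler_term a n) \<le> (C + ln (real n + 2)) / (real n + 1) ^ 2"
    using euler_term_nonneg[OF assms] by simp
qed

lemma shifted_harmonic_over_LIMSEQ:
  assumes "0 \<le> a"
  shows "(\<lambda>n. shifted_harmonic (real (n + 1) + a) / (real (n + 1) + a)) \<longlonglongrightarrow> 0"
proof -
  define C where "C = shifted_harmonic a + 1"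
  define h where "h n = (C + ln (real n + 2)) / (real n + 1)" for n
  have upper: "shifted_harmonic (real (n + 1) + a) / (real (n + 1) + a) \<le> h n" for n
  proof -
    have "shifted_harmonic (real (n + 1) + a) \<le> C + ln (real n + 2)"
      using shifted_harmonic_add_nat_le[OF assms, of "n + 1"] by (simp add: C_def add_ac)
    then show ?thesis
      unfolding h_def using assms
      by (intro frac_le) (auto simp: C_def add_nonneg_nonneg shifted_harmonic_nonneg)
  qed
  have lower: "0 \<le> shifted_harmonic (real (n + 1) + a) / (real (n + 1) + a)" for n
    using assms by (simp add: shifted_harmonic_nonneg)
  have "h \<longlonglongrightarrow> 0"
    unfolding h_def by real_asymp
  then show ?thesis
    by (rule tendsto_sandwich[where f = "\<lambda>_. 0" and h = h, rotated 3]) (use lower upper in auto)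
qed

lemma euler_term_Suc_diff:
  assumes "0 \<le> a"
  defines "u \<equiv> \<lambda>n. shifted_harmonic (real (n + 1) + a) / (real (n + 1) + a)"
  shows "(a + 1) * euler_term (a + 1) n - a * euler_term a n
           = 1 / (real (n + 1) * (real (n + 1) + (a + 1))) + (u n - u (Suc n))"
proof -
  define c where "c = real (n + 1)"
  define h where "h = shifted_harmonic (c + a)"
  have c: "0 < c" by (simp add: c_def)
  have h_Suc: "shifted_harmonic (c + (a + 1)) = h + 1 / (c + a + 1)"
    unfolding h_def using shifted_harmonic_Suc[of "c + a"] c assms by (simp add: add_ac)
  have u: "u n = h / (c + a)" "u (Suc n) = (h + 1 / (c + a + 1)) / (c + a + 1)"
    using h_Suc by (simp_all add: u_def h_def c_def add_ac)
  have "(a + 1) * euler_term (a + 1) n - a * euler_term a n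
          = (a + 1) * ((h + 1 / (c + a + 1)) / (c * (c + (a + 1)))) - a * (h / (c * (c + a)))"
    unfolding euler_term_def c_def[symmetric] h_Suc h_def[symmetric] ..
  also have "\<dots> = (h + 1 / (c + a + 1)) * (1 / c - 1 / (c + a + 1)) - h * (1 / c - 1 / (c + a))"
    using inverse_diff_inverse_add[OF c, of a] inverse_diff_inverse_add[OF c, of "a + 1"] assms
    by (simp add: ac_simps)
  also have "\<dots> = 1 / (c * (c + (a + 1))) + (h / (c + a) - (h + 1 / (c + a + 1)) / (c + a + 1))"
    by (simp add: algebra_simps add_divide_distrib)
  finally show ?thesis unfolding u c_def .
qed

lemma euler_term_Suc_diff_sums:
  assumes "0 \<le> a"
  shows "(\<lambda>n. (a + 1) * euler_term (a + 1) n - a * euler_term a n)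
           sums (2 * shifted_harmonic (a + 1) / (a + 1))"
proof -
  define u where "u n = shifted_harmonic (real (n + 1) + a) / (real (n + 1) + a)" for n
  have "(\<lambda>n. (a + 1) / (real (n + 1) * (real (n + 1) + (a + 1))) / (a + 1))
          sums (shifted_harmonic (a + 1) / (a + 1))"
    using assms by (intro sums_divide shifted_harmonic_sums) simp
  then have "(\<lambda>n. 1 / (real (n + 1) * (real (n + 1) + (a + 1)))) sums (shifted_harmonic (a + 1) / (a + 1))"
    using assms by simp
  moreover have "(\<lambda>n. u n - u (Suc n)) sums (u 0 - 0)"
    unfolding u_def by (intro telescope_sums' shifted_harmonic_over_LIMSEQ assms)
  ultimately have "(\<lambda>n. 1 / (real (n + 1) * (real (n + 1) + (a + 1))) + (u n - u (Suc n)))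
                     sums (shifted_harmonic (a + 1) / (a + 1) + (u 0 - 0))"
    by (rule sums_add)
  then show ?thesis
    using euler_term_Suc_diff[OF assms] by (simp add: u_def add_ac)
qed

definition euler_remainder :: "real \<Rightarrow> real" where
  "euler_remainder a =
     (\<Sum>n. (shifted_harmonic (real (n + 1) + a) - shifted_harmonic a)
             * (a / (real (n + 1) * (real (n + 1) + a))))"

lemma euler_term_split:
  "a * euler_term a n
     = shifted_harmonic a * (a / (real (n + 1) * (real (n + 1) + a)))
       + (shifted_harmonic (real (n + 1) + a) - shifted_harmonic a)
         * (a / (real (n + 1) * (real (n + 1) + a)))"
  unfolding euler_term_def by (simp add: left_diff_distrib right_diff_distrib diff_divide_distrib ac_simps)

lemma euler_remainder_sums:
  assumes "0 \<le> a"
  shows "(\<lambda>n. (shifted_harmonic (real (n + 1) + a) - shifted_harmonic a)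
               * (a / (real (n + 1) * (real (n + 1) + a)))) sums euler_remainder a"
proof -
  have "summable (\<lambda>n. a * euler_term a n - shifted_harmonic a * (a / (real (n + 1) * (real (n + 1) + a))))"
    using assms
    by (intro summable_diff summable_mult summable_euler_term sums_summable[OF shifted_harmonic_sums])
  then show ?thesis
    unfolding euler_remainder_def euler_term_split by (simp add: summable_sums)
qed

lemma euler_term_sums_remainder:
  assumes "0 \<le> a"
  shows "(\<lambda>n. a * euler_term a n) sums (shifted_harmonic a ^ 2 + euler_remainder a)"
  unfolding euler_term_split power2_eq_square
  using assms by (intro sums_add sums_mult shifted_harmonic_sums euler_remainder_sums)

lemma euler_remainder_Suc:
  assumes "0 \<le> a"
  shows "euler_remainder (a + 1) = euler_remainder a + 1 / (a + 1) ^ 2"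
proof -
  define h where "h = shifted_harmonic (a + 1)"
  define e where "e = 1 / (a + 1)"
  have h: "shifted_harmonic a = h - e"
    using shifted_harmonic_Suc[OF assms] by (simp add: h_def e_def)
  have "(\<lambda>n. (a + 1) * euler_term (a + 1) n - a * euler_term a n)
          sums ((h ^ 2 + euler_remainder (a + 1)) - (shifted_harmonic a ^ 2 + euler_remainder a))"
    using assms unfolding h_def by (intro sums_diff euler_term_sums_remainder) auto
  then have "h ^ 2 + euler_remainder (a + 1) - ((h - e) ^ 2 + euler_remainder a) = 2 * h * e"
    using euler_term_Suc_diff_sums[OF assms] sums_unique2 unfolding h h_def e_def by fastforce
  then have "euler_remainder (a + 1) = euler_remainder a + e ^ 2"
    by (simp add: power2_eq_square algebra_simps)
  then show ?thesis by (simp add: e_def power_one_over)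
qed

lemma ratio_bounded_euler_remainder: "ratio_bounded 3 euler_remainder"
  unfolding euler_remainder_def
proof (rule ratio_bounded_suminf)
  fix n
  define c where "c = real (n + 1)"
  have "ratio_bounded (1 + (1 + 1 + 0))
          (\<lambda>x. (\<Sum>i<n + 1. 1 / (real i + 1 + x)) * (x * (1 / (c + x)) * (1 / c)))"
    by (intro ratio_bounded_mult ratio_bounded_sum ratio_bounded_ident ratio_bounded_inverse_add
        ratio_bounded_const) (auto simp: c_def)
  moreover have "(\<Sum>i<n + 1. 1 / (real i + 1 + x)) * (x * (1 / (c + x)) * (1 / c))
                   = (shifted_harmonic (c + x) - shifted_harmonic x) * (x / (c * (c + x)))" if "0 < x" for x
    using shifted_harmonic_add_nat[of x "n + 1"] that by (simp add: c_def)
  ultimately show "ratio_bounded 3 (\<lambda>x. (shifted_harmonic (c + x) - shifted_harmonic x) * (x / (c * (c + x))))"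
    by (subst ratio_bounded_cong[symmetric]) (auto simp: numeral_3_eq_3)
qed (use euler_remainder_sums in \<open>auto simp: sums_iff\<close>)

lemma euler_remainder_le_linear:
  assumes "0 \<le> a"
  shows "euler_remainder a \<le> a * (\<Sum>n. euler_term 0 n)"
proof -
  have "(shifted_harmonic (real (n + 1) + a) - shifted_harmonic a) * (a / (real (n + 1) * (real (n + 1) + a)))
          \<le> a * euler_term 0 n" for n
  proof -
    define c where "c = real (n + 1)"
    have c: "1 \<le> c" by (simp add: c_def)
    have diff: "shifted_harmonic (c + x) - shifted_harmonic x = (\<Sum>i<n + 1. 1 / (real i + 1 + x))"
      if "0 \<le> x" for x
      using shifted_harmonic_add_nat[OF that, of "n + 1"] unfolding c_def by simp
    have nonneg: "0 \<le> shifted_harmonic (c + x) - shifted_harmonic x" if "0 \<le> x" for x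
      unfolding diff[OF that] using that by (intro sum_nonneg) auto
    have "(\<Sum>i<n + 1. 1 / (real i + 1 + a)) \<le> (\<Sum>i<n + 1. 1 / (real i + 1 + 0))"
      using assms by (intro sum_mono divide_left_mono) auto
    then have "shifted_harmonic (c + a) - shifted_harmonic a \<le> shifted_harmonic (c + 0) - shifted_harmonic 0"
      using diff[OF assms] diff[of 0] by simp
    moreover have "a / (c * (c + a)) \<le> a / (c * c)"
      using assms c by (intro divide_left_mono mult_left_mono) auto
    ultimately have "(shifted_harmonic (c + a) - shifted_harmonic a) * (a / (c * (c + a)))
                       \<le> (shifted_harmonic (c + 0) - shifted_harmonic 0) * (a / (c * c))"
      using assms c nonneg[of 0] by (intro mult_mono) auto
    also have "\<dots> = a * euler_term 0 n"
      by (simp add: euler_term_def c_def shifted_harmonic_def)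
    finally show ?thesis unfolding c_def .
  qed
  then show ?thesis
    using assms
    by (intro sums_le[OF _ euler_remainder_sums sums_mult[OF summable_sums[OF summable_euler_term]]]) auto
qed

lemma tendsto_at_right_0_linear_bound:
  fixes f :: "real \<Rightarrow> real"
  assumes "\<And>x. 0 < x \<Longrightarrow> 0 \<le> f x" "\<And>x. 0 < x \<Longrightarrow> f x \<le> C * x"
  shows "(f \<longlongrightarrow> 0) (at_right 0)"
proof (rule tendsto_sandwich[where f = "\<lambda>_. 0" and h = "\<lambda>x. C * x"])
  show "eventually (\<lambda>x. 0 \<le> f x) (at_right 0)" "eventually (\<lambda>x. f x \<le> C * x) (at_right 0)"
    using assms eventually_at_right_less[of "0 :: real"] by (auto elim: eventually_mono)
  show "((\<lambda>x. C * x) \<longlongrightarrow> 0) (at_right 0)"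
    by real_asymp
qed simp

lemma euler_remainder_eq_shifted_harmonic_gen2:
  assumes "0 < a"
  shows "euler_remainder a = shifted_harmonic_gen 2 a"
proof (rule ratio_bounded_periodic_diff_eq
    [OF ratio_bounded_euler_remainder ratio_bounded_shifted_harmonic_gen2 _ _ _ _ assms])
  show "shifted_harmonic_gen 2 x \<le> (\<Sum>k. 1 / real (k + 1) ^ 2)" if "0 < x" for x
    using that by (intro shifted_harmonic_gen_le) auto
  show "euler_remainder (x + 1) - shifted_harmonic_gen 2 (x + 1) = euler_remainder x - shifted_harmonic_gen 2 x"
    if "0 < x" for x
    using that by (simp add: euler_remainder_Suc shifted_harmonic_gen_Suc)
  show "(euler_remainder \<longlongrightarrow> 0) (at_right 0)"
    using ratio_bounded_nonneg[OF ratio_bounded_euler_remainder] euler_remainder_le_linear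
    by (intro tendsto_at_right_0_linear_bound[where C = "\<Sum>n. euler_term 0 n"]) (auto simp: mult.commute)
  show "(shifted_harmonic_gen 2 \<longlongrightarrow> 0) (at_right 0)"
    using ratio_bounded_nonneg[OF ratio_bounded_shifted_harmonic_gen2] shifted_harmonic_gen2_le_linear
    by (intro tendsto_at_right_0_linear_bound[where C = "2 * (\<Sum>k. 1 / real (k + 1) ^ 2)"])
       (auto simp: ac_simps)
qed

lemma euler_term_sums:
  assumes "0 < a"
  shows "euler_term a sums ((shifted_harmonic a ^ 2 + shifted_harmonic_gen 2 a) / a)"
  using sums_divide[OF euler_term_sums_remainder[of a], of a] assms
  by (simp add: euler_remainder_eq_shifted_harmonic_gen2)

theorem mainTheorem6:
  fixes k :: nat and \<alpha> :: real
  assumes "\<alpha> > real k"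
  shows "(\<lambda>n. shifted_harmonic (real (n + 1) + \<alpha>)
               / ((real (n + 1) + real k) * (real (n + 1) + \<alpha>)))
         sums ((shifted_harmonic (\<alpha> - real k) ^ 2 + shifted_harmonic_gen 2 (\<alpha> - real k))
                 / (\<alpha> - real k)
               - (\<Sum>j = 1..k. shifted_harmonic (\<alpha> + real j - real k)
                               / (real j * (\<alpha> + real j - real k))))"
proof -
  define b where "b = \<alpha> - real k"
  have b: "0 < b" using assms by (simp add: b_def)
  have shifted: "euler_term b (n + k) = shifted_harmonic (real (n + 1) + \<alpha>)
                   / ((real (n + 1) + real k) * (real (n + 1) + \<alpha>))" for n
    by (simp add: euler_term_def b_def algebra_simps)
  have head: "(\<Sum>i<k. euler_term b i) = (\<Sum>j = 1..k. shifted_harmonic (\<alpha> + real j - real k)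
                                                  / (real j * (\<alpha> + real j - real k)))"
    unfolding sum_bounds_lt_plus1[symmetric]
    by (intro sum.cong) (simp_all add: euler_term_def b_def algebra_simps)
  have "(\<lambda>n. euler_term b (n + k))
          sums ((shifted_harmonic b ^ 2 + shifted_harmonic_gen 2 b) / b - (\<Sum>i<k. euler_term b i))"
    using euler_term_sums[OF b] by (subst sums_iff_shift) simp
  then show ?thesis
    unfolding shifted head by (simp only: b_def)
qed

end
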